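(* For any $\gamma_x \ge 0$ and $\gamma_\theta \ge 0$, along the momentum-enriched flow the function $\mathcal{F}_t := \mathcal{F}(\theta_t, m_t, q_t)$ satisfies $$\frac{\mathrm{d}}{\mathrm{d}t}\mathcal{F}_t = -\gamma_\theta \|\nabla_{m}\mathcal{F}(\theta_t,m_t,q_t)\|^2 - \gamma_x \|\nabla_{u}\delta_{q}\mathcal{F}[\theta_t,m_t,q_t]\|^2_{L^2(q_t)} \le 0,$$ where $\|f\|^2_{L^2(q)} := \int \|f(x,u)\|^2 \, q(x,u)\,\mathrm{d}x\,\mathrm{d}u$. In particular $\mathcal{F}_t$ is non-increasing in $t$.
   Context: Consider a latent variable model $p_\theta(y,x)$ with parameters $\theta\in\mathbb{R}^{d_\theta}$, latent variables $x\in\mathbb{R}^{d_x}$ and fixed observed data $y$. Introduce momentum variables $m\in\mathbb{R}^{d_\theta}$ and $u\in\mathbb{R}^{d_x}$, hyperparameters $\eta_\theta,\eta_x>0$, $r_{\eta_x}:=\mathcal{N}(0,\eta_x^{-1}I_{d_x})$, and $\rho_{\theta,\eta_x}(x,u):=p_\theta(y,x)\,r_{\eta_x}(u)$. For $q\in\mathcal{P}(\mathbb{R}^{2d_x})$ (probability densities on $(x,u)$-space with finite second moment), define $$\mathcal{F}(\theta,m,q):=\int \log\Big(\frac{q(x,u)}{\rho_{\theta,\eta_x}(x,u)}\Big)\,q(x,u)\,\mathrm{d}x\,\mathrm{d}u + \frac{\eta_\theta}{2}\|m\|^2 .$$ Its first variation in $q$ is $\delta_q\mathcal{F}[\theta,m,q](x,u)=\log\frac{q(x,u)}{\rho_{\theta,\eta_x}(x,u)}+1$,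 and $\nabla_m\mathcal{F}=\eta_\theta m$. For $\gamma\ge 0$ let $\mathsf{D}_\gamma:=\begin{pmatrix}0 & -I\\ I & \gamma I\end{pmatrix}$ (with identity blocks of the appropriate dimension). The momentum-enriched flow $(\theta_t,m_t,q_t)_{t\ge0}$ is defined by the damped Hamiltonian dynamics $$(\dot\theta_t,\dot m_t) = -\mathsf{D}_{\gamma_\theta}\nabla_{(\theta,m)}\mathcal{F}(\theta_t,m_t,q_t),\qquad \dot q_t = \nabla_{(x,u)}\cdot\big(q_t\,\mathsf{D}_{\gamma_x}\nabla_{(x,u)}\delta_q\mathcal{F}[\theta_t,m_t,q_t]\big),$$ equivalently the Fokker–Planck equation of the McKean–Vlasov SDE $\mathrm{d}\theta_t=\eta_\theta m_t\,\mathrm{d}t$, $\mathrm{d}m_t=[\int\nabla_\theta \log p_{\theta_t}(y,x)\,q_{t,X}(\mathrm{d}x)-\gamma_\theta\eta_\theta m_t]\mathrm{d}t$, $\mathrm{d}X_t=\eta_x U_t\,\mathrm{d}t$, $\mathrm{d}U_t=[\nabla_x\log p_{\theta_t}(y,X_t)-\gamma_x\eta_x U_t]\mathrm{d}t+\sqrt{2\gamma_x}\,\mathrm{d}W_t$, with $q_t=\mathrm{Law}(X_t,U_t)$ and $q_{t,X}$ its $x$-marginal. *)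

theory Defs
  imports "HOL-Analysis.Analysis"
begin

definition grad :: "('a::real_inner \<Rightarrow> real) \<Rightarrow> 'a \<Rightarrow> 'a" where
  "grad f z = (SOME g. GDERIV f z :> g)"

definition divg :: "('a::euclidean_space \<Rightarrow> 'a) \<Rightarrow> 'a \<Rightarrow> real" where
  "divg V z = (\<Sum>b\<in>Basis. frechet_derivative V (at z) b \<bullet> b)"

text \<open>The matrix D_gamma = [[0, -I], [I, gamma I]] acting on pairs (a, b).\<close>
definition Dmat :: "real \<Rightarrow> 'a::real_vector \<times> 'a \<Rightarrow> 'a \<times> 'a" where
  "Dmat \<gamma> v = (- snd v, fst v + \<gamma> *\<^sub>R snd v)"

definition gauss :: "real \<Rightarrow> 'a::euclidean_space \<Rightarrow> real" where
  "gauss \<eta> u = (\<eta> / (2 * pi)) powr (real DIM('a) / 2) * exp (- \<eta> * norm u ^ 2 / 2)"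

text \<open>rho_{theta,eta_x}(x,u) = p_theta(y,x) r_{eta_x}(u); the observed data y is fixed
  and absorbed into p, so p theta x stands for p_theta(y,x).\<close>
definition rho :: "('p \<Rightarrow> 'x \<Rightarrow> real) \<Rightarrow> real \<Rightarrow> 'p \<Rightarrow> 'x::euclidean_space \<times> 'x \<Rightarrow> real" where
  "rho p \<eta>x \<theta> z = p \<theta> (fst z) * gauss \<eta>x (snd z)"

definition Fcal :: "('p \<Rightarrow> 'x \<Rightarrow> real) \<Rightarrow> real \<Rightarrow> real \<Rightarrow> 'p \<Rightarrow> 'p::real_normed_vector
      \<Rightarrow> ('x::euclidean_space \<times> 'x \<Rightarrow> real) \<Rightarrow> real" where
  "Fcal p \<eta>x \<eta>\<theta> \<theta> m q =
     (\<integral>z. ln (q z / rho p \<eta>x \<theta> z) * q z \<partial>lborel) + \<eta>\<theta> / 2 * norm m ^ 2"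

definition deltaF :: "('p \<Rightarrow> 'x \<Rightarrow> real) \<Rightarrow> real \<Rightarrow> 'p
      \<Rightarrow> ('x::euclidean_space \<times> 'x \<Rightarrow> real) \<Rightarrow> 'x \<times> 'x \<Rightarrow> real" where
  "deltaF p \<eta>x \<theta> q z = ln (q z / rho p \<eta>x \<theta> z) + 1"

definition grad_theta :: "('p::real_inner \<Rightarrow> 'x \<Rightarrow> real) \<Rightarrow> 'p \<Rightarrow> 'x \<Rightarrow> 'p" where
  "grad_theta p \<theta> x = grad (\<lambda>\<theta>'. ln (p \<theta>' x)) \<theta>"

definition flux :: "('p \<Rightarrow> 'x \<Rightarrow> real) \<Rightarrow> real \<Rightarrow> real \<Rightarrow> 'p
      \<Rightarrow> ('x::euclidean_space \<times> 'x \<Rightarrow> real) \<Rightarrow> 'x \<times> 'x \<Rightarrow> 'x \<times> 'x" where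
  "flux p \<eta>x \<gamma>x \<theta> q z = q z *\<^sub>R Dmat \<gamma>x (grad (deltaF p \<eta>x \<theta> q) z)"

text \<open>The momentum-enriched flow on t \<ge> 0 (derivatives at t taken within [0,\<infinity>)):
  (theta', m') = - D_{gamma_theta} grad_{(theta,m)} F, written out explicitly
  (grad_theta F = - \<integral> grad_theta log p q, grad_m F = eta_theta m), and the PDE
  d/dt q_t = div (q_t D_{gamma_x} grad deltaF) holding pointwise (classical sense).
  The integral against the x-marginal q_{t,X} is written as the integral against q_t.\<close>
definition momentum_flow ::
  "('p::euclidean_space \<Rightarrow> 'x \<Rightarrow> real) \<Rightarrow> real \<Rightarrow> real \<Rightarrow> real \<Rightarrow> real
   \<Rightarrow> (real \<Rightarrow> 'p) \<Rightarrow> (real \<Rightarrow> 'p) \<Rightarrow> (real \<Rightarrow> 'x::euclidean_space \<times> 'x \<Rightarrow> real) \<Rightarrow> bool" where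
  "momentum_flow p \<eta>\<theta> \<eta>x \<gamma>\<theta> \<gamma>x \<theta> m q \<longleftrightarrow>
     (\<forall>t\<ge>0.
        (\<theta> has_vector_derivative (\<eta>\<theta> *\<^sub>R m t)) (at t within {0..}) \<and>
        (m has_vector_derivative
           ((\<integral>z. q t z *\<^sub>R grad_theta p (\<theta> t) (fst z) \<partial>lborel) - (\<gamma>\<theta> * \<eta>\<theta>) *\<^sub>R m t))
          (at t within {0..}) \<and>
        (\<forall>z. ((\<lambda>s. q s z) has_real_derivative divg (flux p \<eta>x \<gamma>x (\<theta> t) (q t)) z)
               (at t within {0..})))"

end

theory Submission
  imports Defs
begin

(* Write F = E + eta_theta/2 |m|^2, where E is the relative entropy of q with respect to rho_theta.
   Differentiating under the integral sign, dE/dt = \<integral> deltaF dq/dt - \<integral> q grad_theta log p . theta'.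
   By the Fokker-Planck equation and an integration by parts, the first term equals
   - \<integral> grad deltaF . D_gamma_x grad deltaF q = - gamma_x \<integral> |grad_u deltaF|^2 q, because the
   antisymmetric part of D_gamma does no work; the boundary term vanishes since the integral of a
   partial derivative of an integrable field is zero (Fubini and the fundamental theorem of calculus
   along lines). As theta' = eta_theta m, the second term cancels the cross term of
   d/dt eta_theta/2 |m|^2, leaving - gamma_theta eta_theta^2 |m|^2 = - gamma_theta |grad_m F|^2.
   Monotonicity then follows from the mean value theorem. *)

lemma integrable_lborel_translate:
  fixes f :: "'a::euclidean_space \<Rightarrow> 'b::{banach, second_countable_topology}"
  assumes "integrable lborel f"
  shows "integrable lborel (\<lambda>z. f (z + c))"
proof -
  have "integrable (distr lborel borel ((+) c)) f"
    using assms by (simp add: lborel_distr_plus)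
  then show ?thesis
    using assms by (subst (asm) integrable_distr_eq) (auto simp: add.commute)
qed

lemma integral_lborel_translate:
  fixes f :: "'a::euclidean_space \<Rightarrow> 'b::{banach, second_countable_topology}"
  assumes "integrable lborel f"
  shows "(\<integral>z. f (z + c) \<partial>lborel) = integral\<^sup>L lborel f"
proof -
  have "integral\<^sup>L lborel f = integral\<^sup>L (distr lborel borel ((+) c)) f"
    by (simp add: lborel_distr_plus)
  also have "\<dots> = (\<integral>z. f (z + c) \<partial>lborel)"
    using assms by (subst integral_distr) (auto simp: add.commute)
  finally show ?thesis by simp
qed

lemma integrable_translates_along_segment:
  fixes D :: "'a::euclidean_space \<Rightarrow> real"
  assumes D: "integrable lborel D"
  shows "integrable (lborel \<Otimes>\<^sub>M lborel) (\<lambda>(s::real, z). indicator {0..1} s * D (z + s *\<^sub>R b))"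
proof (rule lborel_pair.Fubini_integrable)
  have [measurable]: "D \<in> borel_measurable borel"
    using D by auto
  show "(\<lambda>(s::real, z). indicator {0..1} s * D (z + s *\<^sub>R b)) \<in> borel_measurable (lborel \<Otimes>\<^sub>M lborel)"
    by measurable
  have "(\<integral>z. \<bar>D (z + s *\<^sub>R b)\<bar> \<partial>lborel) = (\<integral>z. \<bar>D z\<bar> \<partial>lborel)" for s :: real
    using integral_lborel_translate[OF integrable_norm[OF D]] by simp
  then have "(\<lambda>s. \<integral>z. norm (indicator {0..1} s * D (z + s *\<^sub>R b)) \<partial>lborel)
      = (\<lambda>s. indicator {0..1::real} s * (\<integral>z. \<bar>D z\<bar> \<partial>lborel))"
    by (simp add: abs_mult)
  then show "integrable lborel (\<lambda>s. \<integral>z. norm (case_prod (\<lambda>s z. indicator {0..1} s * D (z + s *\<^sub>R b)) (s, z)) \<partial>lborel)"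
    by (simp add: integrable_indicator_iff)
  show "AE s in lborel. integrable lborel (\<lambda>z. case_prod (\<lambda>s z. indicator {0..1::real} s * D (z + s *\<^sub>R b)) (s, z))"
    using integrable_lborel_translate[OF D] by simp
qed

lemma integral_directional_derivative_eq_0:
  fixes W D :: "'a::euclidean_space \<Rightarrow> real"
  assumes W: "integrable lborel W" and D: "integrable lborel D"
    and deriv: "\<And>z s. ((\<lambda>s. W (z + s *\<^sub>R b)) has_real_derivative D (z + s *\<^sub>R b)) (at s)"
  shows "integral\<^sup>L lborel D = 0"
proof -
  define G where "G s z = indicator {0..1} s * D (z + s *\<^sub>R b)" for s :: real and z
  have G: "integrable (lborel \<Otimes>\<^sub>M lborel) (case_prod G)"
    unfolding G_def using integrable_translates_along_segment[OF D] by simp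
  have FTC: "(\<integral>s. G s z \<partial>lborel) = W (z + b) - W z"
    if "integrable lborel (\<lambda>s. G s z)" for z
  proof -
    have "(\<lambda>s. G s z) = (\<lambda>s. if s \<in> {0..1} then D (z + s *\<^sub>R b) else 0)"
      by (auto simp: G_def)
    with has_integral_integral_lborel[OF that]
    have "((\<lambda>s. D (z + s *\<^sub>R b)) has_integral (\<integral>s. G s z \<partial>lborel)) {0..1}"
      by (simp only: has_integral_restrict_UNIV)
    moreover have "((\<lambda>s. D (z + s *\<^sub>R b)) has_integral W (z + 1 *\<^sub>R b) - W (z + 0 *\<^sub>R b)) {0..1}"
      by (rule fundamental_theorem_of_calculus)
        (auto intro!: has_field_derivative_at_within deriv
          simp: has_real_derivative_iff_has_vector_derivative[symmetric])
    ultimately show ?thesis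
      by (simp add: has_integral_unique)
  qed
  have "integral\<^sup>L lborel D = (\<integral>s. (\<integral>z. G s z \<partial>lborel) \<partial>lborel)"
    by (simp add: G_def integral_lborel_translate[OF D])
  also have "\<dots> = (\<integral>z. (\<integral>s. G s z \<partial>lborel) \<partial>lborel)"
    using lborel_pair.Fubini_integral[OF G] by simp
  also have "\<dots> = (\<integral>z. W (z + b) - W z \<partial>lborel)"
  proof (rule integral_cong_AE)
    show "(\<lambda>z. \<integral>s. G s z \<partial>lborel) \<in> borel_measurable lborel"
      using lborel_pair.integrable_snd[OF G] by auto
    show "(\<lambda>z. W (z + b) - W z) \<in> borel_measurable lborel"
      using W integrable_lborel_translate[OF W] by auto
    show "AE z in lborel. (\<integral>s. G s z \<partial>lborel) = W (z + b) - W z"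
      using lborel_pair.AE_integrable_snd[OF G] by (rule AE_mp) (auto intro: FTC)
  qed
  also have "\<dots> = 0"
    using W integrable_lborel_translate[OF W] by (simp add: integral_lborel_translate)
  finally show ?thesis .
qed

lemma integral_partial_derivative_eq_0:
  fixes V :: "'a::euclidean_space \<Rightarrow> 'b::euclidean_space"
  assumes diff: "\<And>z. V differentiable (at z)" and V: "integrable lborel V"
    and DV: "integrable lborel (\<lambda>z. frechet_derivative V (at z) b \<bullet> c)"
  shows "(\<integral>z. frechet_derivative V (at z) b \<bullet> c \<partial>lborel) = 0"
proof (rule integral_directional_derivative_eq_0[where W = "\<lambda>z. V z \<bullet> c"])
  show "integrable lborel (\<lambda>z. V z \<bullet> c)"
    using V by (rule integrable_inner_left)
  fix z s
  define F where "F = frechet_derivative V (at (z + s *\<^sub>R b))"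
  have "(V has_derivative F) (at (z + s *\<^sub>R b))"
    unfolding F_def using diff by (rule frechet_derivative_works[THEN iffD1])
  then have "((\<lambda>s. V (z + s *\<^sub>R b)) has_derivative (\<lambda>h. F (h *\<^sub>R b))) (at s)"
    by (rule has_derivative_compose[rotated]) (auto intro!: derivative_eq_intros)
  then have "((\<lambda>s. V (z + s *\<^sub>R b) \<bullet> c) has_derivative (\<lambda>h. F (h *\<^sub>R b) \<bullet> c)) (at s)"
    by (rule bounded_linear.has_derivative[OF bounded_linear_inner_left])
  moreover have "(\<lambda>h. F (h *\<^sub>R b) \<bullet> c) = (*) (F b \<bullet> c)"
    using linear_scale[OF has_derivative_linear[OF \<open>(V has_derivative F) _\<close>]] by auto
  ultimately show "((\<lambda>s. V (z + s *\<^sub>R b) \<bullet> c) has_real_derivative F b \<bullet> c) (at s)"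
    by (simp add: has_field_derivative_def)
qed (fact DV)

lemma grad_eqI:
  fixes f :: "'a::real_inner \<Rightarrow> real"
  assumes "GDERIV f z :> g"
  shows "grad f z = g"
proof -
  have "GDERIV f z :> grad f z"
    unfolding grad_def using assms by (rule someI)
  from this assms have "(\<lambda>h. h \<bullet> grad f z) = (\<lambda>h. h \<bullet> g)"
    unfolding gderiv_def by (rule has_derivative_unique)
  then have "(grad f z - g) \<bullet> (grad f z - g) = 0"
    by (metis inner_diff_right right_minus_eq)
  then show ?thesis by simp
qed

lemma has_derivative_grad:
  fixes f :: "'a::euclidean_space \<Rightarrow> real"
  assumes "f differentiable (at z)"
  shows "(f has_derivative (\<lambda>h. h \<bullet> grad f z)) (at z)"
proof -
  define F where "F = frechet_derivative f (at z)"
  have F: "(f has_derivative F) (at z)"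
    unfolding F_def using assms by (rule frechet_derivative_works[THEN iffD1])
  have "F h = h \<bullet> (\<Sum>b\<in>Basis. F b *\<^sub>R b)" for h
  proof -
    have "F h = F (\<Sum>b\<in>Basis. (h \<bullet> b) *\<^sub>R b)"
      by (simp add: euclidean_representation)
    also have "\<dots> = (\<Sum>b\<in>Basis. (h \<bullet> b) * F b)"
      using has_derivative_linear[OF F] by (simp add: linear_sum linear_scale)
    finally show ?thesis
      by (simp add: inner_sum_right mult.commute)
  qed
  then have F_eq: "F = (\<lambda>h. h \<bullet> (\<Sum>b\<in>Basis. F b *\<^sub>R b))"
    by blast
  with F have "grad f z = (\<Sum>b\<in>Basis. F b *\<^sub>R b)"
    by (intro grad_eqI) (simp add: gderiv_def)
  with F F_eq show ?thesis
    by simp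
qed

lemma grad_Fcal_momentum: "grad (\<lambda>m'. Fcal p \<eta>x \<eta>\<theta> \<theta> m' q) m = \<eta>\<theta> *\<^sub>R m"
proof (rule grad_eqI)
  show "GDERIV (\<lambda>m'. Fcal p \<eta>x \<eta>\<theta> \<theta> m' q) m :> \<eta>\<theta> *\<^sub>R m"
    unfolding gderiv_def Fcal_def power2_norm_eq_inner
    by (auto intro!: derivative_eq_intros simp: inner_commute algebra_simps)
qed

lemma divg_scaleR:
  fixes d :: "'a::euclidean_space \<Rightarrow> real" and V :: "'a \<Rightarrow> 'a"
  assumes "d differentiable (at z)" and "V differentiable (at z)"
  shows "divg (\<lambda>w. d w *\<^sub>R V w) z = grad d z \<bullet> V z + d z * divg V z"
proof -
  define F where "F = frechet_derivative V (at z)"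
  have "(V has_derivative F) (at z)"
    unfolding F_def using assms(2) by (rule frechet_derivative_works[THEN iffD1])
  with has_derivative_grad[OF assms(1)]
  have "((\<lambda>w. d w *\<^sub>R V w) has_derivative (\<lambda>h. d z *\<^sub>R F h + (h \<bullet> grad d z) *\<^sub>R V z)) (at z)"
    by (rule has_derivative_scaleR)
  then have "frechet_derivative (\<lambda>w. d w *\<^sub>R V w) (at z) = (\<lambda>h. d z *\<^sub>R F h + (h \<bullet> grad d z) *\<^sub>R V z)"
    by (rule frechet_derivative_at[symmetric])
  then have "divg (\<lambda>w. d w *\<^sub>R V w) z = d z * divg V z + (\<Sum>b\<in>Basis. (b \<bullet> grad d z) * (V z \<bullet> b))"
    by (simp add: divg_def F_def inner_add_left sum.distrib sum_distrib_left)
  also have "(\<Sum>b\<in>Basis. (b \<bullet> grad d z) * (V z \<bullet> b)) = grad d z \<bullet> V z"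
    by (subst euclidean_inner) (intro sum.cong refl, simp add: inner_commute)
  finally show ?thesis by simp
qed

lemma integral_mult_divg:
  fixes d :: "'a::euclidean_space \<Rightarrow> real" and V :: "'a \<Rightarrow> 'a"
  assumes d: "\<And>z. d differentiable (at z)" and V: "\<And>z. V differentiable (at z)"
    and dV: "integrable lborel (\<lambda>z. d z *\<^sub>R V z)"
    and D_dV: "\<And>b. b \<in> Basis \<Longrightarrow>
      integrable lborel (\<lambda>z. frechet_derivative (\<lambda>w. d w *\<^sub>R V w) (at z) b \<bullet> b)"
    and grad_dV: "integrable lborel (\<lambda>z. grad d z \<bullet> V z)"
  shows "integrable lborel (\<lambda>z. d z * divg V z)"
    and "(\<integral>z. d z * divg V z \<partial>lborel) = - (\<integral>z. grad d z \<bullet> V z \<partial>lborel)"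
proof -
  have div: "integrable lborel (divg (\<lambda>w. d w *\<^sub>R V w))"
    unfolding divg_def using D_dV by (intro Bochner_Integration.integrable_sum)
  have "integral\<^sup>L lborel (divg (\<lambda>w. d w *\<^sub>R V w)) = 0"
    unfolding divg_def using D_dV d V dV
    by (subst Bochner_Integration.integral_sum)
      (auto intro!: sum.neutral integral_partial_derivative_eq_0 differentiable_scaleR)
  moreover have eq: "(\<lambda>z. d z * divg V z) = (\<lambda>z. divg (\<lambda>w. d w *\<^sub>R V w) z - grad d z \<bullet> V z)"
    using d V by (simp add: divg_scaleR)
  ultimately show "integrable lborel (\<lambda>z. d z * divg V z)"
    and "(\<integral>z. d z * divg V z \<partial>lborel) = - (\<integral>z. grad d z \<bullet> V z \<partial>lborel)"
    using div grad_dV by simp_all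
qed

lemma inner_Dmat_self: "v \<bullet> Dmat \<gamma> v = \<gamma> * norm (snd v) ^ 2"
  by (simp add: Dmat_def inner_prod_def inner_add_right inner_commute power2_norm_eq_inner)

lemma gauss_pos: "\<eta> > 0 \<Longrightarrow> gauss \<eta> u > 0"
  unfolding gauss_def by simp

lemma gauss_differentiable: "gauss \<eta> differentiable (at u)"
  unfolding gauss_def power2_norm_eq_inner differentiable_def
  by (auto intro!: derivative_eq_intros)

lemma rho_pos:
  assumes "\<And>x. p \<theta> x > 0" and "\<eta> > 0"
  shows "rho p \<eta> \<theta> z > 0"
  unfolding rho_def using assms by (intro mult_pos_pos) (simp_all add: gauss_pos)

lemma deltaF_differentiable:
  fixes p :: "'p \<Rightarrow> 'x::euclidean_space \<Rightarrow> real" and Q :: "'x \<times> 'x \<Rightarrow> real"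
  assumes p_pos: "\<And>x. p \<theta> x > 0" and p_diff: "\<And>x. (\<lambda>x'. ln (p \<theta> x')) differentiable (at x)"
    and Q_pos: "Q z > 0" and Q_diff: "Q differentiable (at z)" and \<eta>: "\<eta> > 0"
  shows "deltaF p \<eta> \<theta> Q differentiable (at z)"
proof -
  have rho: "rho p \<eta> \<theta> w > 0" for w
    using p_pos \<eta> by (rule rho_pos)
  have p_differentiable: "p \<theta> differentiable (at x)" for x
  proof -
    obtain D where "((\<lambda>x'. ln (p \<theta> x')) has_derivative D) (at x)"
      using p_diff[of x] unfolding differentiable_def by blast
    from has_derivative_exp[OF this] have "(\<lambda>x'. exp (ln (p \<theta> x'))) differentiable (at x)"
      unfolding differentiable_def by blast
    then show ?thesis
      using p_pos by simp
  qed
  have "(p \<theta> \<circ> fst) differentiable (at z)"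
    by (intro differentiable_chain_at p_differentiable bounded_linear_imp_differentiable bounded_linear_fst)
  moreover have "(gauss \<eta> \<circ> snd) differentiable (at z)"
    by (intro differentiable_chain_at gauss_differentiable bounded_linear_imp_differentiable bounded_linear_snd)
  ultimately have "rho p \<eta> \<theta> differentiable (at z)"
    unfolding rho_def[abs_def] o_def by (intro differentiable_mult) auto
  then have "(\<lambda>w. Q w / rho p \<eta> \<theta> w) differentiable (at z)"
    using Q_diff rho[of z] by (intro differentiable_divide) auto
  then obtain D where D: "((\<lambda>w. Q w / rho p \<eta> \<theta> w) has_derivative D) (at z)"
    unfolding differentiable_def by blast
  have "Q z / rho p \<eta> \<theta> z > 0"
    using Q_pos rho[of z] by simp
  from has_derivative_ln[OF this D] have "(\<lambda>w. ln (Q w / rho p \<eta> \<theta> w)) differentiable (at z)"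
    unfolding differentiable_def by blast
  then show ?thesis
    unfolding deltaF_def[abs_def] by (intro differentiable_add differentiable_const)
qed

lemma has_real_derivative_norm_power2:
  assumes "(f has_vector_derivative v) (at t within S)"
  shows "((\<lambda>s. norm (f s) ^ 2) has_real_derivative 2 * (f t \<bullet> v)) (at t within S)"
  using assms unfolding power2_norm_eq_inner has_vector_derivative_def has_field_derivative_def
  by (auto intro!: derivative_eq_intros simp: inner_commute algebra_simps)

lemma entropy_density_has_derivative:
  fixes p :: "'p::euclidean_space \<Rightarrow> 'x::euclidean_space \<Rightarrow> real"
    and \<theta> :: "real \<Rightarrow> 'p" and q :: "real \<Rightarrow> 'x \<times> 'x \<Rightarrow> real"
  assumes p_pos: "\<And>\<phi>. p \<phi> (fst z) > 0"
    and p_diff: "(\<lambda>\<phi>. ln (p \<phi> (fst z))) differentiable (at (\<theta> s))"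
    and q_pos: "\<And>s. s \<in> S \<Longrightarrow> q s z > 0" and \<eta>: "\<eta> > 0" and s: "s \<in> S"
    and \<theta>': "(\<theta> has_vector_derivative v) (at s within S)"
    and q': "((\<lambda>s. q s z) has_real_derivative q't) (at s within S)"
  shows "((\<lambda>s. ln (q s z / rho p \<eta> (\<theta> s) z) * q s z) has_real_derivative
           deltaF p \<eta> (\<theta> s) (q s) z * q't - q s z * (grad_theta p (\<theta> s) (fst z) \<bullet> v))
         (at s within S)"
proof -
  obtain x u where z: "z = (x, u)"
    by fastforce
  define g where "g = grad_theta p (\<theta> s) x"
  have "((\<lambda>\<phi>. ln (p \<phi> x)) has_derivative (\<lambda>h. h \<bullet> g)) (at (\<theta> s))"
    unfolding g_def grad_theta_def using p_diff z by (auto intro: has_derivative_grad)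
  with \<theta>' have ln_p: "((\<lambda>s. ln (p (\<theta> s) x)) has_real_derivative v \<bullet> g) (at s within S)"
    unfolding has_vector_derivative_def has_field_derivative_def
    by (auto dest: has_derivative_in_compose[OF _ has_derivative_at_withinI] simp: mult.commute[of _ "v \<bullet> g"])
  have ln_q: "((\<lambda>s. ln (q s z)) has_real_derivative q't / q s z) (at s within S)"
    using q' q_pos[OF s] by (auto intro!: derivative_eq_intros)
  have ln_split: "ln (q s' z / rho p \<eta> (\<theta> s') z) = ln (q s' z) - ln (p (\<theta> s') x) - ln (gauss \<eta> u)"
    if "s' \<in> S" for s'
    using q_pos[OF that] p_pos[of "\<theta> s'"] gauss_pos[OF \<eta>, of u] by (simp add: z rho_def ln_div ln_mult)
  have "((\<lambda>s. (ln (q s z) - ln (p (\<theta> s) x) - ln (gauss \<eta> u)) * q s z) has_real_derivative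
      (q't / q s z - v \<bullet> g - 0) * q s z + q't * (ln (q s z) - ln (p (\<theta> s) x) - ln (gauss \<eta> u)))
      (at s within S)"
    by (rule DERIV_mult[OF DERIV_diff[OF DERIV_diff[OF ln_q ln_p] DERIV_const] q'])
  then have "((\<lambda>s. ln (q s z / rho p \<eta> (\<theta> s) z) * q s z) has_real_derivative
      (q't / q s z - v \<bullet> g - 0) * q s z + q't * ln (q s z / rho p \<eta> (\<theta> s) z)) (at s within S)"
    unfolding ln_split[OF s]
    by (rule has_field_derivative_transform_within[OF _ zero_less_one s]) (simp add: ln_split)
  moreover have "(q't / q s z - v \<bullet> g - 0) * q s z + q't * ln (q s z / rho p \<eta> (\<theta> s) z)
      = deltaF p \<eta> (\<theta> s) (q s) z * q't - q s z * (grad_theta p (\<theta> s) (fst z) \<bullet> v)"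
    using q_pos[OF s] by (simp add: deltaF_def g_def z field_simps inner_commute)
  ultimately show ?thesis
    by simp
qed

lemma difference_quotient_LIMSEQ:
  assumes "(f has_real_derivative D) (at t within C)"
    and "\<forall>n. Y n \<in> C - {t}" "Y \<longlonglongrightarrow> t"
  shows "(\<lambda>n. (f (Y n) - f t) / (Y n - t)) \<longlonglongrightarrow> D"
proof -
  have "((\<lambda>y. (f y - f t) / (y - t)) \<longlongrightarrow> D) (at t within C)"
    using assms(1) by (simp add: has_field_derivative_iff)
  moreover have "filterlim Y (at t within C) sequentially"
    using assms(2,3) by (auto simp: filterlim_at)
  ultimately show ?thesis
    by (rule filterlim_compose)
qed

lemma borel_measurable_parametric_derivative:
  fixes f :: "real \<Rightarrow> 'a \<Rightarrow> real"
  assumes "t islimpt C" "t \<in> C"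
    and deriv: "\<And>z. ((\<lambda>s. f s z) has_real_derivative f' z) (at t within C)"
    and meas: "\<And>s. s \<in> C \<Longrightarrow> f s \<in> borel_measurable M"
  shows "f' \<in> borel_measurable M"
proof -
  obtain Y where Y: "\<forall>n. Y n \<in> C - {t}" "Y \<longlonglongrightarrow> t"
    using \<open>t islimpt C\<close> islimpt_sequential by blast
  show ?thesis
  proof (rule borel_measurable_LIMSEQ_metric)
    show "(\<lambda>z. (f (Y n) z - f t z) / (Y n - t)) \<in> borel_measurable M" for n
      using Y meas \<open>t \<in> C\<close> by simp
    show "(\<lambda>n. (f (Y n) z - f t z) / (Y n - t)) \<longlonglongrightarrow> f' z" for z
      using deriv Y by (rule difference_quotient_LIMSEQ)
  qed
qed

lemma has_real_derivative_integral_dominated: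
  fixes f f' :: "real \<Rightarrow> 'a \<Rightarrow> real" and g :: "'a \<Rightarrow> real"
  assumes C: "convex C" "t \<in> C" "t islimpt C"
    and deriv: "\<And>s z. s \<in> C \<Longrightarrow> ((\<lambda>s. f s z) has_real_derivative f' s z) (at s within C)"
    and int: "\<And>s. s \<in> C \<Longrightarrow> integrable M (f s)"
    and bound: "\<And>s z. s \<in> C \<Longrightarrow> \<bar>f' s z\<bar> \<le> g z" and g: "integrable M g"
  shows "((\<lambda>s. integral\<^sup>L M (f s)) has_real_derivative integral\<^sup>L M (f' t)) (at t within C)"
  unfolding has_field_derivative_iff
proof (rule Lim_within_LIMSEQ, intro allI impI)
  fix Y assume Y: "(\<forall>n. Y n \<noteq> t \<and> Y n \<in> C) \<and> Y \<longlonglongrightarrow> t"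
  then have Yn: "Y n \<in> C" "Y n \<noteq> t" for n
    by simp_all
  have "(\<lambda>n. \<integral>z. (f (Y n) z - f t z) / (Y n - t) \<partial>M) \<longlonglongrightarrow> integral\<^sup>L M (f' t)"
  proof (rule integral_dominated_convergence[OF _ _ g])
    show "f' t \<in> borel_measurable M"
      by (rule borel_measurable_parametric_derivative[OF C(3,2) deriv[OF C(2)] borel_measurable_integrable[OF int]])
    show "(\<lambda>z. (f (Y n) z - f t z) / (Y n - t)) \<in> borel_measurable M" for n
      using int[OF Yn(1)] int[OF C(2)] by auto
    show "AE z in M. (\<lambda>n. (f (Y n) z - f t z) / (Y n - t)) \<longlonglongrightarrow> f' t z"
      using Y by (intro AE_I2 difference_quotient_LIMSEQ[OF deriv[OF C(2)]]) simp_all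
    show "AE z in M. norm ((f (Y n) z - f t z) / (Y n - t)) \<le> g z" for n
    proof (rule AE_I2)
      fix z
      have "norm (f (Y n) z - f t z) \<le> g z * norm (Y n - t)"
        by (rule field_differentiable_bound[OF C(1), where f' = "\<lambda>s. f' s z"])
          (use deriv bound Yn(1) C(2) in auto)
      then show "norm ((f (Y n) z - f t z) / (Y n - t)) \<le> g z"
        using Yn(2) by (simp add: divide_le_eq)
    qed
  qed
  moreover have quotient_integral: "(\<integral>z. (f (Y n) z - f t z) / (Y n - t) \<partial>M)
      = (integral\<^sup>L M (f (Y n)) - integral\<^sup>L M (f t)) / (Y n - t)" for n
    by (simp add: int Yn(1) C(2))
  ultimately show "(\<lambda>n. (integral\<^sup>L M (f (Y n)) - integral\<^sup>L M (f t)) / (Y n - t)) \<longlonglongrightarrow> integral\<^sup>L M (f' t)"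
    by (simp only: quotient_integral)
qed

lemma has_real_derivative_integral_locally_dominated:
  fixes f f' :: "real \<Rightarrow> 'a \<Rightarrow> real" and g :: "'a \<Rightarrow> real"
  assumes t: "a \<le> t" and e: "e > 0"
    and deriv: "\<And>s z. a \<le> s \<Longrightarrow> ((\<lambda>s. f s z) has_real_derivative f' s z) (at s within {a..})"
    and int: "\<And>s. a \<le> s \<Longrightarrow> integrable M (f s)"
    and bound: "\<And>s z. s \<in> {t - e..t + e} \<inter> {a..} \<Longrightarrow> \<bar>f' s z\<bar> \<le> g z" and g: "integrable M g"
  shows "((\<lambda>s. integral\<^sup>L M (f s)) has_real_derivative integral\<^sup>L M (f' t)) (at t within {a..})"
proof -
  define C where "C = {t - e..t + e} \<inter> {a..}"
  have "at t within C = at t within {a..}"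
    by (rule at_within_nhd[of _ "{t - e<..<t + e}"]) (use e t in \<open>auto simp: C_def\<close>)
  moreover have "((\<lambda>s. integral\<^sup>L M (f s)) has_real_derivative integral\<^sup>L M (f' t)) (at t within C)"
  proof (rule has_real_derivative_integral_dominated[OF _ _ _ _ _ _ g])
    show "convex C"
      unfolding C_def by (intro convex_Int convex_real_interval)
    show "t \<in> C"
      using t e by (simp add: C_def)
    have "t islimpt {t..t + e}"
      using e by simp
    then show "t islimpt C"
      by (rule islimpt_subset) (use t in \<open>auto simp: C_def\<close>)
    show "((\<lambda>s. f s z) has_real_derivative f' s z) (at s within C)" if "s \<in> C" for s z
      using that by (intro has_field_derivative_subset[OF deriv]) (auto simp: C_def)
  qed (use int bound in \<open>auto simp: C_def\<close>)
  ultimately show ?thesis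
    by simp
qed

lemma DERIV_nonpos_imp_nonincreasing_atLeast:
  fixes f f' :: "real \<Rightarrow> real"
  assumes deriv: "\<And>t. a \<le> t \<Longrightarrow> (f has_real_derivative f' t) (at t within {a..})"
    and nonpos: "\<And>t. a \<le> t \<Longrightarrow> f' t \<le> 0"
    and "a \<le> s" "s \<le> t"
  shows "f t \<le> f s"
proof (rule DERIV_nonpos_imp_decreasing_open[OF \<open>s \<le> t\<close>])
  fix x assume x: "s < x" "x < t"
  with \<open>a \<le> s\<close> have "x \<in> {a<..}"
    by simp
  have "(f has_real_derivative f' x) (at x within {a<..})"
    by (rule has_field_derivative_subset[OF deriv]) (use \<open>x \<in> {a<..}\<close> in auto)
  then have "(f has_real_derivative f' x) (at x)"
    using at_within_open[OF \<open>x \<in> {a<..}\<close> open_greaterThan] by simp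
  then show "\<exists>y. (f has_real_derivative y) (at x) \<and> y \<le> 0"
    using nonpos \<open>x \<in> {a<..}\<close> by auto
next
  show "continuous_on {s..t} f"
    unfolding continuous_on_eq_continuous_within
  proof
    fix x assume "x \<in> {s..t}"
    with \<open>a \<le> s\<close> have "continuous (at x within {a..}) f"
      by (intro DERIV_continuous[OF deriv]) auto
    then show "continuous (at x within {s..t}) f"
      by (rule continuous_within_subset) (use \<open>a \<le> s\<close> in auto)
  qed
qed

(* The hypotheses of propositionE1 minus eta_theta > 0 and the normalisation and second moment
   of q, which the computation never uses. *)
locale regular_momentum_flow =
  fixes p :: "'p::euclidean_space \<Rightarrow> 'x::euclidean_space \<Rightarrow> real"
    and \<theta> m :: "real \<Rightarrow> 'p"
    and q :: "real \<Rightarrow> 'x \<times> 'x \<Rightarrow> real"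
    and \<eta>\<theta> \<eta>x \<gamma>\<theta> \<gamma>x :: real
  assumes eta_x: "\<eta>x > 0"
    and gamma_theta: "\<gamma>\<theta> \<ge> 0" and gamma_x: "\<gamma>x \<ge> 0"
    and flow: "momentum_flow p \<eta>\<theta> \<eta>x \<gamma>\<theta> \<gamma>x \<theta> m q"
    and p_pos: "\<forall>\<phi> x. p \<phi> x > 0"
    and p_diff_theta: "\<forall>\<phi> x. (\<lambda>\<phi>'. ln (p \<phi>' x)) differentiable (at \<phi>)"
    and p_diff_x: "\<forall>\<phi> x. (\<lambda>x'. ln (p \<phi> x')) differentiable (at x)"
    and q_pos: "\<forall>t\<ge>0. \<forall>z. q t z > 0"
    and q_diff: "\<forall>t\<ge>0. \<forall>z. q t differentiable (at z)"
    and flux_diff: "\<forall>t\<ge>0. \<forall>z. flux p \<eta>x \<gamma>x (\<theta> t) (q t) differentiable (at z)"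
    and F_int: "\<forall>t\<ge>0. integrable lborel (\<lambda>z. ln (q t z / rho p \<eta>x (\<theta> t) z) * q t z)"
    and grad_int: "\<forall>t\<ge>0. integrable lborel (\<lambda>z. q t z *\<^sub>R grad_theta p (\<theta> t) (fst z))"
    and dominated: "\<forall>t\<ge>0. \<exists>e>0. \<exists>g. integrable lborel g \<and>
          (\<forall>s\<in>{t - e..t + e} \<inter> {0..}. \<forall>z.
             \<bar>deltaF p \<eta>x (\<theta> s) (q s) z * divg (flux p \<eta>x \<gamma>x (\<theta> s) (q s)) z
              - q s z * (grad_theta p (\<theta> s) (fst z) \<bullet> (\<eta>\<theta> *\<^sub>R m s))\<bar> \<le> g z)"
    and boundary: "\<forall>t\<ge>0.
          integrable lborel (\<lambda>z. deltaF p \<eta>x (\<theta> t) (q t) z *\<^sub>R flux p \<eta>x \<gamma>x (\<theta> t) (q t) z) \<and>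
          (\<forall>b\<in>Basis. integrable lborel (\<lambda>z. frechet_derivative
              (\<lambda>w. deltaF p \<eta>x (\<theta> t) (q t) w *\<^sub>R flux p \<eta>x \<gamma>x (\<theta> t) (q t) w) (at z) b \<bullet> b)) \<and>
          integrable lborel (\<lambda>z. grad (deltaF p \<eta>x (\<theta> t) (q t)) z \<bullet> flux p \<eta>x \<gamma>x (\<theta> t) (q t) z)"
begin

definition dissipation :: "real \<Rightarrow> real" where
  "dissipation t = \<gamma>\<theta> * norm (grad (\<lambda>m'. Fcal p \<eta>x \<eta>\<theta> (\<theta> t) m' (q t)) (m t)) ^ 2
     + \<gamma>x * (\<integral>z. norm (snd (grad (deltaF p \<eta>x (\<theta> t) (q t)) z)) ^ 2 * q t z \<partial>lborel)"

lemma dissipation_nonneg: "t \<ge> 0 \<Longrightarrow> dissipation t \<ge> 0"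
  unfolding dissipation_def using gamma_theta gamma_x q_pos
  by (intro add_nonneg_nonneg mult_nonneg_nonneg integral_nonneg_AE AE_I2) (auto intro: less_imp_le)

lemma theta_has_derivative: "t \<ge> 0 \<Longrightarrow> (\<theta> has_vector_derivative \<eta>\<theta> *\<^sub>R m t) (at t within {0..})"
  using flow unfolding momentum_flow_def by blast

lemma m_has_derivative: "t \<ge> 0 \<Longrightarrow> (m has_vector_derivative
    (\<integral>z. q t z *\<^sub>R grad_theta p (\<theta> t) (fst z) \<partial>lborel) - (\<gamma>\<theta> * \<eta>\<theta>) *\<^sub>R m t) (at t within {0..})"
  using flow unfolding momentum_flow_def by blast

lemma q_has_derivative: "t \<ge> 0 \<Longrightarrow>
    ((\<lambda>s. q s z) has_real_derivative divg (flux p \<eta>x \<gamma>x (\<theta> t) (q t)) z) (at t within {0..})"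
  using flow unfolding momentum_flow_def by blast

lemma entropy_production:
  assumes "t \<ge> 0"
  shows "(\<integral>z. deltaF p \<eta>x (\<theta> t) (q t) z * divg (flux p \<eta>x \<gamma>x (\<theta> t) (q t)) z
            - q t z * (grad_theta p (\<theta> t) (fst z) \<bullet> v) \<partial>lborel)
       = - \<gamma>x * (\<integral>z. norm (snd (grad (deltaF p \<eta>x (\<theta> t) (q t)) z)) ^ 2 * q t z \<partial>lborel)
         - (\<integral>z. q t z *\<^sub>R grad_theta p (\<theta> t) (fst z) \<partial>lborel) \<bullet> v"
proof -
  define d where "d = deltaF p \<eta>x (\<theta> t) (q t)"
  define V where "V = flux p \<eta>x \<gamma>x (\<theta> t) (q t)"
  have d_diff: "d differentiable (at z)" for z
    unfolding d_def by (rule deltaF_differentiable) (use p_pos p_diff_x q_pos q_diff eta_x assms in blast)+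
  have V_diff: "V differentiable (at z)" for z
    unfolding V_def using flux_diff assms by blast
  have "integrable lborel (\<lambda>z. d z *\<^sub>R V z)"
    and "\<And>b. b \<in> Basis \<Longrightarrow>
      integrable lborel (\<lambda>z. frechet_derivative (\<lambda>w. d w *\<^sub>R V w) (at z) b \<bullet> b)"
    and "integrable lborel (\<lambda>z. grad d z \<bullet> V z)"
    using boundary assms unfolding d_def V_def by blast+
  note IBP = integral_mult_divg[OF d_diff V_diff this]
  have "grad d z \<bullet> V z = \<gamma>x * (norm (snd (grad d z)) ^ 2 * q t z)" for z
    by (simp add: V_def flux_def d_def[symmetric] inner_Dmat_self)
  with IBP have "(\<integral>z. d z * divg V z \<partial>lborel) = - \<gamma>x * (\<integral>z. norm (snd (grad d z)) ^ 2 * q t z \<partial>lborel)"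
    by simp
  moreover note IBP(1)
  moreover have "integrable lborel (\<lambda>z. q t z * (grad_theta p (\<theta> t) (fst z) \<bullet> v))"
    using grad_int assms integrable_inner_left[of v lborel "\<lambda>z. q t z *\<^sub>R grad_theta p (\<theta> t) (fst z)"]
    by simp
  ultimately show ?thesis
    using grad_int assms integral_inner_left[of v lborel "\<lambda>z. q t z *\<^sub>R grad_theta p (\<theta> t) (fst z)"]
    by (simp add: d_def V_def)
qed

lemma relative_entropy_has_derivative:
  assumes t: "t \<ge> 0"
  shows "((\<lambda>s. \<integral>z. ln (q s z / rho p \<eta>x (\<theta> s) z) * q s z \<partial>lborel) has_real_derivative
           (\<integral>z. deltaF p \<eta>x (\<theta> t) (q t) z * divg (flux p \<eta>x \<gamma>x (\<theta> t) (q t)) z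
              - q t z * (grad_theta p (\<theta> t) (fst z) \<bullet> (\<eta>\<theta> *\<^sub>R m t)) \<partial>lborel))
         (at t within {0..})"
proof -
  obtain e g where "e > 0" and "integrable lborel g"
    and "\<forall>s\<in>{t - e..t + e} \<inter> {0..}. \<forall>z.
      \<bar>deltaF p \<eta>x (\<theta> s) (q s) z * divg (flux p \<eta>x \<gamma>x (\<theta> s) (q s)) z
        - q s z * (grad_theta p (\<theta> s) (fst z) \<bullet> (\<eta>\<theta> *\<^sub>R m s))\<bar> \<le> g z"
    using dominated t by blast
  moreover have "((\<lambda>s. ln (q s z / rho p \<eta>x (\<theta> s) z) * q s z) has_real_derivative
      deltaF p \<eta>x (\<theta> s) (q s) z * divg (flux p \<eta>x \<gamma>x (\<theta> s) (q s)) z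
        - q s z * (grad_theta p (\<theta> s) (fst z) \<bullet> (\<eta>\<theta> *\<^sub>R m s))) (at s within {0..})"
    if "0 \<le> s" for s z
    by (rule entropy_density_has_derivative)
      (use p_pos p_diff_theta q_pos eta_x that theta_has_derivative q_has_derivative in blast)+
  ultimately show ?thesis
    using F_int t by (intro has_real_derivative_integral_locally_dominated) auto
qed

lemma free_energy_has_derivative:
  assumes t: "t \<ge> 0"
  shows "((\<lambda>s. Fcal p \<eta>x \<eta>\<theta> (\<theta> s) (m s) (q s)) has_real_derivative - dissipation t) (at t within {0..})"
proof -
  let ?I = "\<integral>z. q t z *\<^sub>R grad_theta p (\<theta> t) (fst z) \<partial>lborel"
  have "((\<lambda>s. Fcal p \<eta>x \<eta>\<theta> (\<theta> s) (m s) (q s)) has_real_derivative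
      (- \<gamma>x * (\<integral>z. norm (snd (grad (deltaF p \<eta>x (\<theta> t) (q t)) z)) ^ 2 * q t z \<partial>lborel)
        - ?I \<bullet> (\<eta>\<theta> *\<^sub>R m t))
      + \<eta>\<theta> / 2 * (2 * (m t \<bullet> (?I - (\<gamma>\<theta> * \<eta>\<theta>) *\<^sub>R m t)))) (at t within {0..})"
    unfolding Fcal_def entropy_production[OF t, symmetric]
    by (intro DERIV_add DERIV_cmult relative_entropy_has_derivative has_real_derivative_norm_power2
        m_has_derivative t)
  moreover have "norm (\<eta>\<theta> *\<^sub>R m t) ^ 2 = \<eta>\<theta> ^ 2 * (m t \<bullet> m t)"
    by (simp add: power_mult_distrib power2_norm_eq_inner)
  ultimately show ?thesis
    by (simp add: dissipation_def grad_Fcal_momentum inner_diff_right inner_commute power2_eq_square algebra_simps)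
qed

end

theorem propositionE1:
  fixes p :: "'p::euclidean_space \<Rightarrow> 'x::euclidean_space \<Rightarrow> real"
    and \<theta> m :: "real \<Rightarrow> 'p"
    and q :: "real \<Rightarrow> 'x \<times> 'x \<Rightarrow> real"
    and \<eta>\<theta> \<eta>x \<gamma>\<theta> \<gamma>x :: real
  assumes eta_theta: "\<eta>\<theta> > 0" and eta_x: "\<eta>x > 0"
    and gamma_theta: "\<gamma>\<theta> \<ge> 0" and gamma_x: "\<gamma>x \<ge> 0"
    and flow: "momentum_flow p \<eta>\<theta> \<eta>x \<gamma>\<theta> \<gamma>x \<theta> m q"
    and p_pos: "\<forall>\<phi> x. p \<phi> x > 0"
    and p_diff_theta: "\<forall>\<phi> x. (\<lambda>\<phi>'. ln (p \<phi>' x)) differentiable (at \<phi>)"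
    and p_diff_x: "\<forall>\<phi> x. (\<lambda>x'. ln (p \<phi> x')) differentiable (at x)"
    and q_pos: "\<forall>t\<ge>0. \<forall>z. q t z > 0"
    and q_diff: "\<forall>t\<ge>0. \<forall>z. q t differentiable (at z)"
    and flux_diff: "\<forall>t\<ge>0. \<forall>z. flux p \<eta>x \<gamma>x (\<theta> t) (q t) differentiable (at z)"
    and q_prob: "\<forall>t\<ge>0. integrable lborel (q t) \<and> (\<integral>z. q t z \<partial>lborel) = 1
                   \<and> integrable lborel (\<lambda>z. norm z ^ 2 * q t z)"
    and F_int: "\<forall>t\<ge>0. integrable lborel (\<lambda>z. ln (q t z / rho p \<eta>x (\<theta> t) z) * q t z)"
    and grad_int: "\<forall>t\<ge>0. integrable lborel (\<lambda>z. q t z *\<^sub>R grad_theta p (\<theta> t) (fst z))"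
    and dominated: "\<forall>t\<ge>0. \<exists>e>0. \<exists>g. integrable lborel g \<and>
          (\<forall>s\<in>{t - e..t + e} \<inter> {0..}. \<forall>z.
             \<bar>deltaF p \<eta>x (\<theta> s) (q s) z * divg (flux p \<eta>x \<gamma>x (\<theta> s) (q s)) z
              - q s z * (grad_theta p (\<theta> s) (fst z) \<bullet> (\<eta>\<theta> *\<^sub>R m s))\<bar> \<le> g z)"
    and boundary: "\<forall>t\<ge>0.
          integrable lborel (\<lambda>z. deltaF p \<eta>x (\<theta> t) (q t) z *\<^sub>R flux p \<eta>x \<gamma>x (\<theta> t) (q t) z) \<and>
          (\<forall>b\<in>Basis. integrable lborel (\<lambda>z. frechet_derivative
              (\<lambda>w. deltaF p \<eta>x (\<theta> t) (q t) w *\<^sub>R flux p \<eta>x \<gamma>x (\<theta> t) (q t) w) (at z) b \<bullet> b)) \<and>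
          integrable lborel (\<lambda>z. grad (deltaF p \<eta>x (\<theta> t) (q t)) z \<bullet> flux p \<eta>x \<gamma>x (\<theta> t) (q t) z)"
  shows "(\<forall>t\<ge>0.
            ((\<lambda>s. Fcal p \<eta>x \<eta>\<theta> (\<theta> s) (m s) (q s)) has_real_derivative
               (- \<gamma>\<theta> * norm (grad (\<lambda>m'. Fcal p \<eta>x \<eta>\<theta> (\<theta> t) m' (q t)) (m t)) ^ 2
                - \<gamma>x * (\<integral>z. norm (snd (grad (deltaF p \<eta>x (\<theta> t) (q t)) z)) ^ 2 * q t z \<partial>lborel)))
              (at t within {0..})
          \<and> - \<gamma>\<theta> * norm (grad (\<lambda>m'. Fcal p \<eta>x \<eta>\<theta> (\<theta> t) m' (q t)) (m t)) ^ 2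
                - \<gamma>x * (\<integral>z. norm (snd (grad (deltaF p \<eta>x (\<theta> t) (q t)) z)) ^ 2 * q t z \<partial>lborel) \<le> 0)
        \<and> (\<forall>s t. 0 \<le> s \<longrightarrow> s \<le> t \<longrightarrow>
              Fcal p \<eta>x \<eta>\<theta> (\<theta> t) (m t) (q t) \<le> Fcal p \<eta>x \<eta>\<theta> (\<theta> s) (m s) (q s))"
proof -
  interpret regular_momentum_flow p \<theta> m q \<eta>\<theta> \<eta>x \<gamma>\<theta> \<gamma>x
    by unfold_locales fact+
  let ?F = "\<lambda>s. Fcal p \<eta>x \<eta>\<theta> (\<theta> s) (m s) (q s)"
  have dissipation_eq: "- \<gamma>\<theta> * norm (grad (\<lambda>m'. Fcal p \<eta>x \<eta>\<theta> (\<theta> t) m' (q t)) (m t)) ^ 2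
      - \<gamma>x * (\<integral>z. norm (snd (grad (deltaF p \<eta>x (\<theta> t) (q t)) z)) ^ 2 * q t z \<partial>lborel)
      = - dissipation t" for t
    by (simp add: dissipation_def)
  have "?F t \<le> ?F s" if "0 \<le> s" "s \<le> t" for s t
    using that free_energy_has_derivative dissipation_nonneg
    by (intro DERIV_nonpos_imp_nonincreasing_atLeast[of 0 ?F "\<lambda>t. - dissipation t"]) auto
  then show ?thesis
    unfolding dissipation_eq using free_energy_has_derivative dissipation_nonneg by simp
qed

end
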